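(* Let $\mu>1$ and for each $N\ge3$ set $\gamma=\mu\gamma_1^N$. Then $\lim_{N\to\infty}c_N=V(\mu)$, where $V(\mu)=\prod_{k=1}^\infty\frac{\mu k^2-1}{\mu k^2+2}$, and $0<V(\mu)<\infty$.
   Context: $\gamma^N_k=\frac{1}{2\sin^2(k\pi/N)}$ for $k\ge1$; $c_N=\big[1-\frac{3}{2+2\gamma}\big]^{e(N)/2}\prod_{k=1}^{\lfloor (N-1)/2\rfloor}\big[1-\frac{3}{2+\gamma/\gamma^N_k}\big]$, where $e(N)=1$ if $N$ is even and $0$ if $N$ is odd. *)

theory Defs
  imports "HOL-Analysis.Analysis"
begin

definition gammaN :: "nat \<Rightarrow> nat \<Rightarrow> real" where
  "gammaN N k = 1 / (2 * (sin (real k * pi / real N))^2)"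

definition eN :: "nat \<Rightarrow> real" where
  "eN N = (if even N then 1 else 0)"

definition cN :: "nat \<Rightarrow> real \<Rightarrow> real" where
  "cN N \<gamma> = (1 - 3 / (2 + 2 * \<gamma>)) powr (eN N / 2)
     * (\<Prod>k = 1..(N - 1) div 2. (1 - 3 / (2 + \<gamma> / gammaN N k)))"

definition Vfac :: "real \<Rightarrow> nat \<Rightarrow> real" where
  "Vfac \<mu> k = (\<mu> * (real k)^2 - 1) / (\<mu> * (real k)^2 + 2)"

definition V :: "real \<Rightarrow> real" where
  "V \<mu> = (\<Prod>k. Vfac \<mu> (Suc k))"

end

theory Submission imports Defs "HOL-Real_Asymp.Real_Asymp" begin

(* With gamma = mu * gamma_1^N the factors of c_N are
     fac (2 mu gamma_1^N)                                (the extra factor for even N)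
     fac (mu * R_N(k)^2),  k = 1 .. (N-1) div 2,          R_N(k) = sin (k pi/N) / sin (pi/N),
   where fac t = 1 - 3/(2+t).  For fixed k, R_N(k) -> k, so the k-th factor tends to the
   k-th factor Vfac mu k of V(mu); and the elementary bounds 1 <= R_N(k), k/3 <= R_N(k)
   (valid for 2k <= N) give |ln fac (mu R_N(k)^2)| <= 27 / ((mu - 1) k^2) uniformly in N.
   Taking logarithms, Tannery's theorem (dominated convergence for series) therefore shows
   that the finite products converge to the infinite product V(mu), which converges and is
   positive being the exponential of a convergent series.  Finally gamma_1^N -> infinity, so
   the extra factor tends to 1, and so does its power with exponent e(N)/2.
   The file first develops the factor fac, then the general product version of Tannery's
   theorem and the lemma on the correction factor, then the trigonometric estimates for
   R_N(k), and finally assembles the theorem. *)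

definition fac :: "real \<Rightarrow> real" where
  "fac t = 1 - 3 / (2 + t)"

lemma fac_eq_quotient:
  fixes t :: real assumes "t \<noteq> -2"
  shows "fac t = (t - 1) / (t + 2)"
  using assms by (simp add: fac_def field_simps)

lemma fac_pos_lt_one:
  fixes t :: real assumes "t > 1"
  shows "0 < fac t" "fac t < 1"
  using assms by (simp_all add: fac_eq_quotient)

text \<open>For $t > 1$ the logarithm of the factor is of order $1/t$; this is the summable
  majorant needed in Tannery's theorem.\<close>

lemma abs_ln_fac_le:
  fixes t :: real assumes "t > 1"
  shows "\<bar>ln (fac t)\<bar> \<le> 3 / (t - 1)"
proof -
  have "ln (fac t) < 0" using fac_pos_lt_one[OF assms] by simp
  hence "\<bar>ln (fac t)\<bar> = ln ((t + 2) / (t - 1))"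
    using assms by (simp add: fac_eq_quotient ln_div)
  also have "\<dots> \<le> (t + 2) / (t - 1) - 1"
    using assms by (intro ln_le_minus_one) auto
  also have "\<dots> = 3 / (t - 1)"
    using assms by (simp add: field_simps)
  finally show ?thesis .
qed

lemma fac_tendsto_one:
  assumes "filterlim f at_top F"
  shows "((\<lambda>x. fac (f x)) \<longlongrightarrow> 1) F"
proof -
  have "filterlim (\<lambda>x. 2 + f x) at_top F"
    by (rule filterlim_tendsto_add_at_top[OF tendsto_const assms])
  hence "((\<lambda>x. 3 / (2 + f x)) \<longlongrightarrow> 0) F"
    by (intro tendsto_divide_0[OF tendsto_const] filterlim_at_top_imp_at_infinity)
  from tendsto_diff[OF tendsto_const this, of 1] show ?thesis
    by (simp add: fac_def)
qed

lemma one_less_mult_of_ge_one: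
  fixes \<mu> y :: real assumes "\<mu> > 1" "y \<ge> 1"
  shows "1 < \<mu> * y"
proof -
  have "\<mu> \<le> \<mu> * y" using assms by (simp add: mult_le_cancel_left1)
  thus ?thesis using assms(1) by linarith
qed

lemma Vfac_eq_fac:
  assumes "\<mu> > 0"
  shows "Vfac \<mu> k = fac (\<mu> * (real k)^2)"
proof -
  have "0 \<le> \<mu> * (real k)^2" using assms by simp
  hence "\<mu> * (real k)^2 \<noteq> -2" by linarith
  thus ?thesis by (simp add: Vfac_def fac_eq_quotient add.commute)
qed

lemma tendsto_prod_tannery:
  fixes p :: "nat \<Rightarrow> nat \<Rightarrow> real" and q M :: "nat \<Rightarrow> real" and n :: "nat \<Rightarrow> nat"
  assumes n: "filterlim n at_top sequentially"
    and lim: "\<And>k. (\<lambda>N. p k N) \<longlonglongrightarrow> q k"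
    and q_pos: "\<And>k. 0 < q k"
    and bound: "\<And>N k. N \<ge> N0 \<Longrightarrow> k < n N \<Longrightarrow> 0 < p k N \<and> \<bar>ln (p k N)\<bar> \<le> M k"
    and M_nonneg: "\<And>k. 0 \<le> M k"
    and M: "summable M"
  shows "convergent_prod q \<and> 0 < prodinf q \<and> (\<lambda>N. \<Prod>k<n N. p k N) \<longlonglongrightarrow> prodinf q"
proof -
  define a where "a k N = (if k < n N then ln (p k N) else 0)" for k N
  have a_lim: "(\<lambda>N. a k N) \<longlonglongrightarrow> ln (q k)" for k
  proof -
    have "(\<lambda>N. ln (p k N)) \<longlonglongrightarrow> ln (q k)"
      using q_pos[of k] by (intro tendsto_ln lim) auto
    moreover have "eventually (\<lambda>N. ln (p k N) = a k N) sequentially"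
      using filterlim_at_top[THEN iffD1, OF n, rule_format, of "Suc k"]
      by eventually_elim (simp add: a_def)
    ultimately show ?thesis by (rule Lim_transform_eventually)
  qed
  have "eventually (\<lambda>(k, N). norm (a k N) \<le> M k) (at_top \<times>\<^sub>F sequentially)"
    unfolding eventually_prod_filter
    by (intro exI[of _ "\<lambda>_. True"] exI[of _ "\<lambda>N. N \<ge> N0"])
       (auto simp: a_def eventually_sequentially bound M_nonneg)
  from tannerys_theorem[OF a_lim this M]
  have sum_ln_q: "summable (\<lambda>k. ln (q k))"
    and sum_lim: "(\<lambda>N. suminf (\<lambda>k. a k N)) \<longlonglongrightarrow> suminf (\<lambda>k. ln (q k))"
    by (auto intro: summable_norm_cancel)
  have exp_ln_q: "exp (ln (q k)) = q k" for k using q_pos[of k] by simp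
  have prod_eq: "(\<Prod>k<n N. p k N) = exp (suminf (\<lambda>k. a k N))" if "N \<ge> N0" for N
  proof -
    have "suminf (\<lambda>k. a k N) = (\<Sum>k<n N. ln (p k N))"
      by (subst suminf_finite[of "{..<n N}"]) (auto simp: a_def)
    thus ?thesis using bound[OF that] by (simp add: exp_sum)
  qed
  have "(\<lambda>N. exp (suminf (\<lambda>k. a k N))) \<longlonglongrightarrow> prodinf q"
    using tendsto_exp[OF sum_lim] prodinf_exp[OF sum_ln_q] by (simp add: exp_ln_q)
  moreover have "eventually (\<lambda>N. exp (suminf (\<lambda>k. a k N)) = (\<Prod>k<n N. p k N)) sequentially"
    by (rule eventually_sequentiallyI[of N0]) (simp add: prod_eq)
  ultimately have "(\<lambda>N. \<Prod>k<n N. p k N) \<longlonglongrightarrow> prodinf q"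
    by (rule Lim_transform_eventually)
  moreover have "convergent_prod q" "0 < prodinf q"
    using convergent_prod_exp[OF sum_ln_q] prodinf_exp[OF sum_ln_q] by (simp_all add: exp_ln_q)
  ultimately show ?thesis by blast
qed

lemma powr_tendsto_one:
  fixes b e :: "nat \<Rightarrow> real"
  assumes b: "b \<longlonglongrightarrow> 1" and e: "\<And>N. \<bar>e N\<bar> \<le> 1"
  shows "(\<lambda>N. b N powr e N) \<longlonglongrightarrow> 1"
proof -
  have ln_b: "(\<lambda>N. ln (b N)) \<longlonglongrightarrow> 0"
    using tendsto_ln[OF b] by simp
  have "(\<lambda>N. e N * ln (b N)) \<longlonglongrightarrow> 0"
  proof (rule Lim_null_comparison)
    show "eventually (\<lambda>N. norm (e N * ln (b N)) \<le> \<bar>ln (b N)\<bar>) sequentially"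
      using e by (intro always_eventually allI) (simp add: abs_mult mult_left_le_one_le)
    show "(\<lambda>N. \<bar>ln (b N)\<bar>) \<longlonglongrightarrow> 0"
      using tendsto_rabs[OF ln_b] by simp
  qed
  hence "(\<lambda>N. exp (e N * ln (b N))) \<longlonglongrightarrow> 1"
    using tendsto_exp by fastforce
  moreover have "eventually (\<lambda>N. exp (e N * ln (b N)) = b N powr e N) sequentially"
    using order_tendstoD(1)[OF b zero_less_one] by eventually_elim (simp add: powr_def)
  ultimately show ?thesis by (rule Lim_transform_eventually)
qed

definition sin_ratio :: "nat \<Rightarrow> nat \<Rightarrow> real" where
  "sin_ratio N k = sin (real k * pi / real N) / sin (pi / real N)"

lemma gammaN_ratio:
  "gammaN N 1 / gammaN N k = (sin_ratio N k)^2"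
  unfolding gammaN_def sin_ratio_def
  by (cases "sin (real k * pi / real N) = 0"; cases "sin (pi / real N) = 0")
     (simp_all add: field_simps power_divide)

lemma sin_ge_third:
  fixes x :: real assumes "0 \<le> x" "x \<le> 2"
  shows "x / 3 \<le> sin x"
proof -
  have "\<bar>sin x - (\<Sum>m<3. sin_coeff m * x ^ m)\<bar> \<le> inverse (fact 3) * \<bar>x\<bar> ^ 3"
    by (rule Maclaurin_sin_bound)
  moreover have "(\<Sum>m<3. sin_coeff m * x ^ m) = x"
    by (simp add: numeral_3_eq_3 sin_coeff_def)
  moreover have "inverse (fact 3) * \<bar>x\<bar> ^ 3 = x^3 / 6"
    using assms(1) by (simp add: fact_numeral)
  ultimately have "x - x^3 / 6 \<le> sin x" by linarith
  moreover have "x^3 \<le> 4 * x"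
  proof -
    have "x * x^2 \<le> x * 2^2" using assms by (intro mult_left_mono power_mono) auto
    thus ?thesis by (simp add: power3_eq_cube power2_eq_square)
  qed
  ultimately show ?thesis by linarith
qed

text \<open>On the range $1 \le k$, $2k \le N$ the ratio is at least $\max(1, k/3)$; these lower
  bounds make the logarithms of the factors of $c_N$ uniformly summable.\<close>

lemma sin_ratio_lower_bounds:
  assumes "1 \<le> k" "2 * k \<le> N"
  shows "1 \<le> sin_ratio N k" "real k / 3 \<le> sin_ratio N k"
proof -
  let ?x = "pi / real N" and ?y = "real k * pi / real N"
  have x_pos: "0 < ?x" using assms by simp
  have x_le_y: "?x \<le> ?y" using assms by (intro divide_right_mono) auto
  have y_le: "?y \<le> pi / 2"
  proof -
    have "real k * pi * 2 \<le> real N * pi" using assms by (simp add: mult_right_mono)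
    thus ?thesis using assms by (simp add: field_simps)
  qed
  have sin_x_pos: "0 < sin ?x" using x_pos x_le_y y_le by (intro sin_gt_zero) linarith+
  have sin_mono: "sin ?x \<le> sin ?y"
    using x_pos x_le_y y_le by (intro sin_monotone_2pi_le) linarith+
  thus "1 \<le> sin_ratio N k" using sin_x_pos by (simp add: sin_ratio_def)
  have "real k / 3 = (?y / 3) / ?x" using assms by (simp add: field_simps)
  also have "\<dots> \<le> sin ?y / sin ?x"
  proof (rule frac_le)
    show "?y / 3 \<le> sin ?y" using x_pos x_le_y y_le pi_less_4 by (intro sin_ge_third) linarith+
    show "sin ?x \<le> ?x" using x_pos by (intro sin_x_le_x) auto
  qed (use x_pos sin_x_pos sin_mono in auto)
  finally show "real k / 3 \<le> sin_ratio N k" by (simp add: sin_ratio_def)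
qed

lemma sin_ratio_tendsto: "(\<lambda>N. sin_ratio N (Suc k)) \<longlonglongrightarrow> real (Suc k)"
  unfolding sin_ratio_def by real_asymp

lemma gammaN_1_tendsto_infinity: "filterlim (\<lambda>N. gammaN N 1) at_top sequentially"
  unfolding gammaN_def by real_asymp

lemma cN_as_product:
  "cN N (\<mu> * gammaN N 1) = fac (2 * (\<mu> * gammaN N 1)) powr (eN N / 2)
     * (\<Prod>k<(N - 1) div 2. fac (\<mu> * (sin_ratio N (Suc k))^2))"
proof -
  have "\<mu> * gammaN N 1 / gammaN N (Suc k) = \<mu> * (sin_ratio N (Suc k))^2" for k
    by (simp only: times_divide_eq_right[symmetric] gammaN_ratio)
  hence "(\<Prod>k = 1..(N - 1) div 2. fac (\<mu> * gammaN N 1 / gammaN N k))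
        = (\<Prod>k<(N - 1) div 2. fac (\<mu> * (sin_ratio N (Suc k))^2))"
    by (simp add: prod.atLeast1_atMost_eq)
  thus ?thesis by (simp only: cN_def fac_def)
qed

lemma ln_factor_bound:
  assumes "\<mu> > 1" "k < (N - 1) div 2"
  shows "0 < fac (\<mu> * (sin_ratio N (Suc k))^2)"
    "\<bar>ln (fac (\<mu> * (sin_ratio N (Suc k))^2))\<bar> \<le> 27 / (\<mu> - 1) * inverse ((real (Suc k))^2)"
proof -
  let ?R = "(sin_ratio N (Suc k))^2"
  have "1 \<le> sin_ratio N (Suc k)" "real (Suc k) / 3 \<le> sin_ratio N (Suc k)"
    using sin_ratio_lower_bounds[of "Suc k" N] assms by auto
  hence R_ge: "1 \<le> ?R" "(real (Suc k))^2 / 9 \<le> ?R"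
    by (auto simp: one_le_power power_divide dest: power_mono[where n = 2])
  have t_gt: "\<mu> * ?R > 1" using assms(1) R_ge(1) by (rule one_less_mult_of_ge_one)
  thus "0 < fac (\<mu> * ?R)" by (rule fac_pos_lt_one)
  have "\<bar>ln (fac (\<mu> * ?R))\<bar> \<le> 3 / (\<mu> * ?R - 1)" by (rule abs_ln_fac_le[OF t_gt])
  also have "\<dots> \<le> 3 / ((\<mu> - 1) * ((real (Suc k))^2 / 9))"
  proof (rule divide_left_mono)
    have "(\<mu> - 1) * ((real (Suc k))^2 / 9) \<le> (\<mu> - 1) * ?R"
      using assms(1) R_ge(2) by (intro mult_left_mono) auto
    also have "\<dots> \<le> \<mu> * ?R - 1" using R_ge(1) by (simp add: algebra_simps)
    finally show "(\<mu> - 1) * ((real (Suc k))^2 / 9) \<le> \<mu> * ?R - 1" .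
    show "0 < (\<mu> * ?R - 1) * ((\<mu> - 1) * ((real (Suc k))^2 / 9))"
      using assms(1) t_gt by (intro mult_pos_pos) auto
  qed simp
  also have "\<dots> = 27 / (\<mu> - 1) * inverse ((real (Suc k))^2)"
    by (simp add: field_simps)
  finally show "\<bar>ln (fac (\<mu> * ?R))\<bar> \<le> 27 / (\<mu> - 1) * inverse ((real (Suc k))^2)" .
qed

lemma product_part_tendsto:
  assumes "\<mu> > 1"
  shows "convergent_prod (\<lambda>k. Vfac \<mu> (Suc k)) \<and> 0 < V \<mu>
    \<and> (\<lambda>N. \<Prod>k<(N - 1) div 2. fac (\<mu> * (sin_ratio N (Suc k))^2)) \<longlonglongrightarrow> V \<mu>"
  unfolding V_def
proof (rule tendsto_prod_tannery)
  show "filterlim (\<lambda>N. (N - 1) div 2) at_top sequentially"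
    unfolding filterlim_at_top eventually_sequentially
  proof
    show "\<exists>N0. \<forall>N\<ge>N0. Z \<le> (N - 1) div 2" for Z :: nat
      by (intro exI[of _ "2 * Z + 1"]) presburger
  qed
  show "(\<lambda>N. fac (\<mu> * (sin_ratio N (Suc k))^2)) \<longlonglongrightarrow> Vfac \<mu> (Suc k)" for k
  proof -
    have "1 < \<mu> * (real (Suc k))^2" using assms by (intro one_less_mult_of_ge_one) auto
    hence "2 + \<mu> * (real (Suc k))^2 \<noteq> 0" by linarith
    hence "(\<lambda>N. fac (\<mu> * (sin_ratio N (Suc k))^2)) \<longlonglongrightarrow> fac (\<mu> * (real (Suc k))^2)"
      unfolding fac_def by (intro tendsto_intros sin_ratio_tendsto)
    thus ?thesis using assms by (simp add: Vfac_eq_fac)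
  qed
  show "0 < Vfac \<mu> (Suc k)" for k
    using assms by (simp add: Vfac_eq_fac fac_pos_lt_one one_less_mult_of_ge_one)
  show "0 \<le> 27 / (\<mu> - 1) * inverse ((real (Suc k))^2)" for k using assms by simp
  show "summable (\<lambda>k. 27 / (\<mu> - 1) * inverse ((real (Suc k))^2))"
    using summable_Suc_iff[of "\<lambda>n. inverse ((real n)^2)"] inverse_power_summable[of 2]
    by (intro summable_mult) auto
qed (use ln_factor_bound[OF assms] in auto)

theorem proposition3p2:
  fixes \<mu> :: real
  assumes "\<mu> > 1"
  shows "((\<lambda>N. cN N (\<mu> * gammaN N 1)) \<longlonglongrightarrow> V \<mu>)
         \<and> convergent_prod (\<lambda>k. Vfac \<mu> (Suc k)) \<and> 0 < V \<mu>"
proof -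
  have product: "convergent_prod (\<lambda>k. Vfac \<mu> (Suc k))" "0 < V \<mu>"
    "(\<lambda>N. \<Prod>k<(N - 1) div 2. fac (\<mu> * (sin_ratio N (Suc k))^2)) \<longlonglongrightarrow> V \<mu>"
    using product_part_tendsto[OF assms] by auto
  have "filterlim (\<lambda>N. 2 * (\<mu> * gammaN N 1)) at_top sequentially"
    using assms by (intro filterlim_tendsto_pos_mult_at_top tendsto_const
        filterlim_tendsto_pos_mult_at_top[OF tendsto_const _ gammaN_1_tendsto_infinity]) auto
  hence "(\<lambda>N. fac (2 * (\<mu> * gammaN N 1)) powr (eN N / 2)) \<longlonglongrightarrow> 1"
    by (intro powr_tendsto_one fac_tendsto_one) (simp_all add: eN_def)
  from tendsto_mult[OF this product(3)]
  have "(\<lambda>N. cN N (\<mu> * gammaN N 1)) \<longlonglongrightarrow> V \<mu>"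
    unfolding cN_as_product by simp
  with product show ?thesis by blast
qed

end
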